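(* Let $D$ be a unitrivalent diagram in $B^{csl}(2)$. If $D$ has a connected component of degree at least $2$, then $D$ is trivial modulo ( * ), i.e. $D=0$ in $B^{cl}(2)$.
   Context: Fix an integer $k\ge 1$. A unitrivalent diagram colored by $\{1,\dots,k\}$ is a finite graph all of whose vertices are univalent or trivalent. Each trivalent vertex carries a cyclic ordering of its incident half-edges, each univalent vertex is labeled by a color in $\{1,\dots,k\}$, and every connected component contains at least one univalent vertex. Its degree is half the total number of vertices; the degree of a connected component is defined likewise. $B^{csl}(k)$ is the graded real vector space spanned by such diagrams modulo three relations: - the AS relation: reversing the cyclic order at one trivalent vertex negates the diagram; - the standard IHX relation; - every diagram having a connected component that is not a tree is zero. Relation ( * ) is defined as follows. Let $x\in\{1,\dots,k\}$ be a color, and let $E$ be a diagram which has, besides its colored univalent vertices, exactly one extra uncolored univalent vertex $u$. Then $\sum_w E_w=0$. The sum runs over all univalent vertices $w$ of $E$ of color $x$. The diagram $E_w$ is obtained by attaching the edge ending at $u$ to an interior point of the edge incident to $w$, creating a new trivalent vertex, with cyclic orientation fixed by a uniform convention. $B^{cl}(k)$ is the quotient of $B^{csl}(k)$ by all relations ( * ). A diagram is trivial modulo ( * ) if its image in $B^{cl}(k)$ is zero. *)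

theory Defs
  imports Complex_Main
begin

text \<open>A diagram is given by a finite set of darts (half-edges); an involution
  edg without fixed points pairing darts into edges; a permutation rot of the
  darts whose orbits are the vertices (orbits of size 1: univalent vertices,
  orbits of size 3: trivalent vertices, the 3-cycle being the cyclic order);
  and a colouring of (the unique darts of) univalent vertices.\<close>

record diagram =
  darts :: "nat set"
  edg   :: "nat \<Rightarrow> nat"
  rot   :: "nat \<Rightarrow> nat"
  col   :: "nat \<Rightarrow> nat option"

definition univalent :: "diagram \<Rightarrow> nat \<Rightarrow> bool" where
  "univalent D h \<longleftrightarrow> h \<in> darts D \<and> rot D h = h"

definition trivalent :: "diagram \<Rightarrow> nat \<Rightarrow> bool" where
  "trivalent D h \<longleftrightarrow> h \<in> darts D \<and> rot D h \<noteq> h"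

definition vert :: "diagram \<Rightarrow> nat \<Rightarrow> nat set" where
  "vert D h = {h, rot D h, rot D (rot D h)}"

definition steps :: "diagram \<Rightarrow> (nat \<times> nat) set" where
  "steps D = {(x, edg D x) | x. x \<in> darts D} \<union> {(x, rot D x) | x. x \<in> darts D}"

definition component_of :: "diagram \<Rightarrow> nat \<Rightarrow> nat set" where
  "component_of D h = (steps D)\<^sup>* `` {h}"

definition components :: "diagram \<Rightarrow> nat set set" where
  "components D = component_of D ` darts D"

definition vertices_in :: "diagram \<Rightarrow> nat set \<Rightarrow> nat set set" where
  "vertices_in D C = vert D ` C"

text \<open>A connected component is a tree iff #edges = #vertices - 1.\<close>
definition is_tree_comp :: "diagram \<Rightarrow> nat set \<Rightarrow> bool" where
  "is_tree_comp D C \<longleftrightarrow> card C div 2 + 1 = card (vertices_in D C)"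

definition wf_graph :: "diagram \<Rightarrow> bool" where
  "wf_graph D \<longleftrightarrow> finite (darts D)
     \<and> (\<forall>h\<in>darts D. edg D h \<in> darts D \<and> edg D h \<noteq> h \<and> edg D (edg D h) = h)
     \<and> bij_betw (rot D) (darts D) (darts D)
     \<and> (\<forall>h\<in>darts D. rot D h = h \<or> rot D (rot D (rot D h)) = h)
     \<and> (\<forall>h\<in>darts D. \<exists>h'\<in>component_of D h. univalent D h')"

definition is_diagram :: "nat \<Rightarrow> diagram \<Rightarrow> bool" where
  "is_diagram k D \<longleftrightarrow> wf_graph D
     \<and> (\<forall>h. univalent D h \<longrightarrow> (\<exists>c\<in>{1..k}. col D h = Some c))"

definition is_prediagram :: "nat \<Rightarrow> diagram \<Rightarrow> nat \<Rightarrow> bool" where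
  "is_prediagram k E u \<longleftrightarrow> wf_graph E \<and> univalent E u \<and> col E u = None
     \<and> (\<forall>h. univalent E h \<and> h \<noteq> u \<longrightarrow> (\<exists>c\<in>{1..k}. col E h = Some c))"

definition diag_iso :: "diagram \<Rightarrow> diagram \<Rightarrow> bool" where
  "diag_iso D D' \<longleftrightarrow> (\<exists>f. bij_betw f (darts D) (darts D')
     \<and> (\<forall>h\<in>darts D. f (edg D h) = edg D' (f h) \<and> f (rot D h) = rot D' (f h))
     \<and> (\<forall>h. univalent D h \<longrightarrow> col D' (f h) = col D h))"

text \<open>AS: reverse the cyclic order at the vertex of dart v.\<close>
definition flip :: "diagram \<Rightarrow> nat \<Rightarrow> diagram" where
  "flip D v = D\<lparr>rot := (\<lambda>h. if h \<in> vert D v then rot D (rot D h) else rot D h)\<rparr>"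

definition reattach :: "diagram \<Rightarrow> nat \<Rightarrow> nat \<Rightarrow> nat \<Rightarrow> nat \<Rightarrow> nat \<Rightarrow> nat \<Rightarrow> nat \<Rightarrow> nat \<Rightarrow> diagram" where
  "reattach D a1 a2 b1 b2 m1 m2 m3 m4 = D\<lparr>edg := (\<lambda>h.
      if h = a1 then m1 else if h = m1 then a1
      else if h = a2 then m2 else if h = m2 then a2
      else if h = b1 then m3 else if h = m3 then b1
      else if h = b2 then m4 else if h = m4 then b2
      else edg D h)\<rparr>"

definition ihx_config :: "diagram \<Rightarrow> nat \<Rightarrow> nat \<Rightarrow> bool" where
  "ihx_config D a b \<longleftrightarrow> trivalent D a \<and> trivalent D b \<and> edg D a = b
     \<and> b \<notin> vert D a
     \<and> (\<forall>h\<in>{rot D a, rot D (rot D a), rot D b, rot D (rot D b)}.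
          edg D h \<notin> vert D a \<union> vert D b)"

text \<open>Attaching the edge ending at the uncoloured univalent vertex u to an interior
  point of the edge incident to w; new darts n1 (towards w) and n2, new trivalent
  vertex with cyclic order (u, n1, n2).\<close>
definition attach :: "diagram \<Rightarrow> nat \<Rightarrow> nat \<Rightarrow> nat \<Rightarrow> nat \<Rightarrow> diagram" where
  "attach E u w n1 n2 = E\<lparr>darts := darts E \<union> {n1, n2},
     edg := (\<lambda>h. if h = w then n1 else if h = n1 then w
                 else if h = n2 then edg E w else if h = edg E w then n2 else edg E h),
     rot := (\<lambda>h. if h = u then n1 else if h = n1 then n2 else if h = n2 then u else rot E h),
     col := (col E)(u := None, n1 := None, n2 := None)\<rparr>"

definition delta :: "diagram \<Rightarrow> diagram \<Rightarrow> real" where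
  "delta D = (\<lambda>X. if X = D then 1 else 0)"

inductive_set rels_csl :: "nat \<Rightarrow> (diagram \<Rightarrow> real) set" for k where
  iso: "\<lbrakk>is_diagram k D; is_diagram k D'; diag_iso D D'\<rbrakk>
        \<Longrightarrow> (\<lambda>X. delta D X - delta D' X) \<in> rels_csl k"
| AS: "\<lbrakk>is_diagram k D; trivalent D v\<rbrakk>
        \<Longrightarrow> (\<lambda>X. delta D X + delta (flip D v) X) \<in> rels_csl k"
| IHX: "\<lbrakk>is_diagram k D; ihx_config D a b;
         a1 = rot D a; a2 = rot D a1; b1 = rot D b; b2 = rot D b1;
         l1 = edg D a1; l2 = edg D a2; l3 = edg D b1; l4 = edg D b2\<rbrakk>
        \<Longrightarrow> (\<lambda>X. delta D X + delta (reattach D a1 a2 b1 b2 l2 l3 l1 l4) X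
                 + delta (reattach D a1 a2 b1 b2 l3 l1 l2 l4) X) \<in> rels_csl k"
| nontree: "\<lbrakk>is_diagram k D; C \<in> components D; \<not> is_tree_comp D C\<rbrakk>
        \<Longrightarrow> delta D \<in> rels_csl k"

inductive_set rels_cl :: "nat \<Rightarrow> (diagram \<Rightarrow> real) set" for k where
  csl: "r \<in> rels_csl k \<Longrightarrow> r \<in> rels_cl k"
| star: "\<lbrakk>is_prediagram k E u; x \<in> {1..k}; n1 \<notin> darts E; n2 \<notin> darts E; n1 \<noteq> n2\<rbrakk>
        \<Longrightarrow> (\<lambda>X. \<Sum>w\<in>{w. univalent E w \<and> col E w = Some x}.
                     delta (attach E u w n1 n2) X) \<in> rels_cl k"

inductive_set lin_span :: "('a \<Rightarrow> real) set \<Rightarrow> ('a \<Rightarrow> real) set" for R where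
  zero: "(\<lambda>_. 0) \<in> lin_span R"
| add: "\<lbrakk>r \<in> R; s \<in> lin_span R\<rbrakk> \<Longrightarrow> (\<lambda>X. s X + c * r X) \<in> lin_span R"

definition trivial_cl :: "nat \<Rightarrow> diagram \<Rightarrow> bool" where
  "trivial_cl k D \<longleftrightarrow> delta D \<in> lin_span (rels_cl k)"

definition comp_degree :: "diagram \<Rightarrow> nat set \<Rightarrow> real" where
  "comp_degree D C = real (card (vertices_in D C)) / 2"

end

theory Submission
  imports Defs
begin

text \<open>Every diagram with a trivalent vertex vanishes in B^cl(2); we argue by induction on
  the number of darts not lying on struts. If some component is not a tree, the diagram
  is already zero in B^csl. Otherwise a tree component contains a cherry: a trivalent
  vertex p whose darts p and q = rot p lead to leaves a and b. If a and b have the same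
  colour, exchanging them is an isomorphism onto the diagram with the cyclic order at p
  reversed, so AS kills the diagram. If their colours x and y differ, prune the cherry,
  leaving the strut a--b and the uncoloured dart r = rot q, and apply relation (*) in
  colour x at r. Its term at a is the diagram itself; at a leaf w with trivalent partner
  the term has fewer non-strut darts; at a leaf w on a strut the term has a
  monochromatic cherry if the partner of w has colour x, and is isomorphic to the
  diagram if it has colour y, the only other colour. Hence a positive multiple of the
  diagram is a combination of relations. Finally, a component of degree at least 2
  contains a trivalent vertex, since a component without one is a single strut.\<close>

section \<open>Linear combinations\<close>

lemma lin_span_base: "r \<in> R \<Longrightarrow> r \<in> lin_span R"
  using lin_span.add[OF _ lin_span.zero, of r R 1] by simp

lemma lin_span_add:
  assumes "s \<in> lin_span R" and "t \<in> lin_span R"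
  shows "(\<lambda>X. s X + t X) \<in> lin_span R"
  using assms(2)
proof (induction t rule: lin_span.induct)
  case zero
  then show ?case using assms(1) by simp
next
  case (add r t c)
  from lin_span.add[OF add.hyps(1) add.IH, of c] show ?case
    by (simp add: add.assoc)
qed

lemma lin_span_scale: "s \<in> lin_span R \<Longrightarrow> (\<lambda>X. c * s X) \<in> lin_span R"
proof (induction s rule: lin_span.induct)
  case zero
  then show ?case by (simp add: lin_span.zero)
next
  case (add r s d)
  from lin_span.add[OF add.hyps(1) add.IH, of "c * d"] show ?case
    by (simp add: algebra_simps)
qed

lemma lin_span_diff:
  "s \<in> lin_span R \<Longrightarrow> t \<in> lin_span R \<Longrightarrow> (\<lambda>X. s X - t X) \<in> lin_span R"
  using lin_span_add[of s R "\<lambda>X. (-1) * t X"] lin_span_scale[of t R "-1"] by simp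

lemma lin_span_sum:
  "finite W \<Longrightarrow> (\<And>w. w \<in> W \<Longrightarrow> f w \<in> lin_span R) \<Longrightarrow> (\<lambda>X. \<Sum>w\<in>W. f w X) \<in> lin_span R"
proof (induction W rule: finite_induct)
  case empty
  then show ?case using lin_span.zero by simp
next
  case (insert w W)
  then show ?case using lin_span_add[of "f w" R] by simp
qed

lemma lin_span_cancel_scalar:
  assumes "(\<lambda>X. c * s X) \<in> lin_span R" and "c \<noteq> 0"
  shows "s \<in> lin_span R"
  using lin_span_scale[OF assms(1), of "1 / c"] assms(2) by simp

section \<open>Components, struts and cherries\<close>

lemma self_in_component_of: "x \<in> component_of D x"
  unfolding component_of_def by auto

lemma component_of_trans: "(x, y) \<in> (steps D)\<^sup>* \<Longrightarrow> z \<in> component_of D y \<Longrightarrow> z \<in> component_of D x"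
  unfolding component_of_def by auto

lemma edg_in_component_of:
  "h \<in> component_of D x \<Longrightarrow> h \<in> darts D \<Longrightarrow> edg D h \<in> component_of D x"
  unfolding component_of_def steps_def by (auto intro: rtrancl_into_rtrancl)

lemma rot_in_component_of:
  "h \<in> component_of D x \<Longrightarrow> h \<in> darts D \<Longrightarrow> rot D h \<in> component_of D x"
  unfolding component_of_def steps_def by (auto intro: rtrancl_into_rtrancl)

definition is_cherry :: "diagram \<Rightarrow> nat \<Rightarrow> bool" where
  "is_cherry D p \<longleftrightarrow> trivalent D p \<and> univalent D (edg D p) \<and> univalent D (edg D (rot D p))"

locale wf_diagram =
  fixes D :: diagram
  assumes wf: "wf_graph D"
begin

lemma finite_darts: "finite (darts D)"
  using wf unfolding wf_graph_def by blast

lemma edg_in_darts: "h \<in> darts D \<Longrightarrow> edg D h \<in> darts D"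
  using wf unfolding wf_graph_def by blast

lemma edg_neq: "h \<in> darts D \<Longrightarrow> edg D h \<noteq> h"
  using wf unfolding wf_graph_def by blast

lemma edg_edg [simp]: "h \<in> darts D \<Longrightarrow> edg D (edg D h) = h"
  using wf unfolding wf_graph_def by blast

lemma edg_eq_iff: "x \<in> darts D \<Longrightarrow> y \<in> darts D \<Longrightarrow> edg D x = edg D y \<longleftrightarrow> x = y"
  by (metis edg_edg)

lemma rot_bij: "bij_betw (rot D) (darts D) (darts D)"
  using wf unfolding wf_graph_def by blast

lemma rot_in_darts: "h \<in> darts D \<Longrightarrow> rot D h \<in> darts D"
  using rot_bij by (meson bij_betwE)

lemma rot_inj: "x \<in> darts D \<Longrightarrow> y \<in> darts D \<Longrightarrow> rot D x = rot D y \<Longrightarrow> x = y"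
  using rot_bij by (meson bij_betw_imp_inj_on inj_onD)

lemma rot_eq_univalent: "univalent D u \<Longrightarrow> x \<in> darts D \<Longrightarrow> rot D x = u \<Longrightarrow> x = u"
  unfolding univalent_def using rot_inj by metis

lemma univalent_or_trivalent: "h \<in> darts D \<Longrightarrow> univalent D h \<or> trivalent D h"
  unfolding univalent_def trivalent_def by auto

lemma trivalent_rot3: "trivalent D h \<Longrightarrow> rot D (rot D (rot D h)) = h"
  using wf unfolding wf_graph_def trivalent_def by blast

lemma trivalent_facts:
  assumes "trivalent D h"
  shows "h \<in> darts D" "rot D h \<in> darts D" "rot D (rot D h) \<in> darts D"
    and "rot D h \<noteq> h" "rot D (rot D h) \<noteq> h" "rot D (rot D h) \<noteq> rot D h"
proof -
  show h: "h \<in> darts D" "rot D h \<noteq> h" using assms unfolding trivalent_def by auto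
  show r: "rot D h \<in> darts D" "rot D (rot D h) \<in> darts D" using h rot_in_darts by auto
  show "rot D (rot D h) \<noteq> rot D h" using h r rot_inj by metis
  show "rot D (rot D h) \<noteq> h" using trivalent_rot3[OF assms] h by metis
qed

lemma trivalent_rot: "trivalent D h \<Longrightarrow> trivalent D (rot D h)"
  using trivalent_facts trivalent_rot3 unfolding trivalent_def by metis

lemma vert_trivalent: "trivalent D h \<Longrightarrow> y \<in> vert D h \<Longrightarrow> vert D y = vert D h"
  using trivalent_rot3 unfolding vert_def by auto

lemma card_vert_trivalent: "trivalent D h \<Longrightarrow> card (vert D h) = 3"
  using trivalent_facts[of h] unfolding vert_def by (auto simp: card_insert_if)

lemma vert_univalent: "univalent D h \<Longrightarrow> vert D h = {h}"
  unfolding vert_def univalent_def by auto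

lemma steps_in_darts: "(x, y) \<in> steps D \<Longrightarrow> x \<in> darts D \<and> y \<in> darts D"
  unfolding steps_def using edg_in_darts rot_in_darts by auto

lemma rtrancl_steps_in_darts: "(x, y) \<in> (steps D)\<^sup>* \<Longrightarrow> x \<in> darts D \<Longrightarrow> y \<in> darts D"
  by (induction rule: rtrancl_induct) (auto dest: steps_in_darts)

lemma component_of_subset: "x \<in> darts D \<Longrightarrow> component_of D x \<subseteq> darts D"
  unfolding component_of_def using rtrancl_steps_in_darts by auto

lemma rot_bij_outside_vert:
  assumes "h \<in> darts D"
  shows "bij_betw (rot D) (darts D - vert D h) (darts D - vert D h)"
proof -
  have "rot D ` vert D h = vert D h"
  proof (cases "univalent D h")
    case True
    then show ?thesis using vert_univalent unfolding univalent_def by auto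
  next
    case False
    then have "trivalent D h" using assms univalent_or_trivalent by blast
    then show ?thesis using trivalent_rot3 unfolding vert_def by auto
  qed
  moreover have "vert D h \<subseteq> darts D"
    using assms rot_in_darts unfolding vert_def by auto
  ultimately have "bij_betw (rot D) (vert D h) (vert D h)"
    using rot_bij unfolding bij_betw_def by (meson inj_on_subset)
  then show ?thesis
    using bij_betw_DiffI[OF rot_bij] \<open>vert D h \<subseteq> darts D\<close> by blast
qed

lemma steps_strut_iff:
  assumes hu: "univalent D h" and eu: "univalent D (edg D h)" and xy: "(x, y) \<in> steps D"
  shows "x \<in> {h, edg D h} \<longleftrightarrow> y \<in> {h, edg D h}"
proof -
  have hd: "h \<in> darts D" and xd: "x \<in> darts D"
    using hu xy unfolding univalent_def steps_def by auto
  have "y = edg D x \<or> y = rot D x"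
    using xy unfolding steps_def by blast
  then consider "y = edg D x" | "y = rot D x"
    by blast
  then show ?thesis
  proof cases
    case 1
    show ?thesis
    proof
      assume "x \<in> {h, edg D h}"
      then show "y \<in> {h, edg D h}" using 1 hd by auto
    next
      assume "y \<in> {h, edg D h}"
      then have "edg D (edg D x) \<in> {edg D h, h}" using 1 hd by auto
      then show "x \<in> {h, edg D h}" using xd by auto
    qed
  next
    case 2
    show ?thesis
    proof
      assume "x \<in> {h, edg D h}"
      then have "rot D x = x" using hu eu unfolding univalent_def by blast
      then show "y \<in> {h, edg D h}" using 2 \<open>x \<in> {h, edg D h}\<close> by simp
    next
      assume "y \<in> {h, edg D h}"
      then have "rot D x = h \<or> rot D x = edg D h" using 2 by simp
      then show "x \<in> {h, edg D h}"
        using rot_eq_univalent[OF hu xd] rot_eq_univalent[OF eu xd] by blast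
    qed
  qed
qed

lemma rtrancl_steps_strut_iff:
  assumes "univalent D h" "univalent D (edg D h)" and "(x, y) \<in> (steps D)\<^sup>*"
  shows "x \<in> {h, edg D h} \<longleftrightarrow> y \<in> {h, edg D h}"
  using assms(3)
proof (induction rule: rtrancl_induct)
  case (step y z)
  then show ?case using steps_strut_iff[OF assms(1,2) step.hyps(2)] by simp
qed simp

lemma component_of_strut:
  "univalent D h \<Longrightarrow> univalent D (edg D h) \<Longrightarrow> component_of D h \<subseteq> {h, edg D h}"
  unfolding component_of_def using rtrancl_steps_strut_iff by blast

lemma card_trivalent_darts:
  assumes "finite T" and "\<And>h. h \<in> T \<Longrightarrow> trivalent D h \<and> rot D h \<in> T"
  shows "card T = 3 * card (vert D ` T)"
proof -
  have "vert D h \<subseteq> T" if "h \<in> T" for h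
    using assms(2) that unfolding vert_def by auto
  then have union: "\<Union> (vert D ` T) = T"
    unfolding vert_def by auto
  have "3 * card (vert D ` T) = card (\<Union> (vert D ` T))"
  proof (rule card_partition)
    show "finite (vert D ` T)" "finite (\<Union> (vert D ` T))"
      using assms(1) union by auto
    show "card c = 3" if "c \<in> vert D ` T" for c
      using that assms(2) card_vert_trivalent by auto
    show "c1 \<inter> c2 = {}" if "c1 \<in> vert D ` T" "c2 \<in> vert D ` T" "c1 \<noteq> c2" for c1 c2
    proof -
      have "vert D z = c" if "c \<in> vert D ` T" "z \<in> c" for c z
        using that assms(2) vert_trivalent by auto
      then show ?thesis using that by blast
    qed
  qed
  then show ?thesis using union by simp
qed

lemma card_vert_image:
  assumes "finite C" and "C \<subseteq> darts D"
  shows "card (vert D ` C) = card {h\<in>C. univalent D h} + card (vert D ` {h\<in>C. trivalent D h})"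
proof -
  let ?L = "{h\<in>C. univalent D h}" and ?T = "{h\<in>C. trivalent D h}"
  have "vert D ` C = vert D ` ?L \<union> vert D ` ?T"
    using assms(2) univalent_or_trivalent by blast
  moreover have "vert D ` ?L = (\<lambda>h. {h}) ` ?L"
    using vert_univalent by auto
  moreover have "(\<lambda>h. {h}) ` ?L \<inter> vert D ` ?T = {}"
  proof -
    have "{h} \<noteq> vert D h'" if "trivalent D h'" for h h'
    proof
      assume "{h} = vert D h'"
      then have "card (vert D h') = 1" by (simp flip: \<open>{h} = vert D h'\<close>)
      then show False using card_vert_trivalent[OF that] by simp
    qed
    then show ?thesis by blast
  qed
  ultimately show ?thesis
    using assms(1) by (simp add: card_Un_disjoint card_image)
qed

lemma tree_component_fewer_trivalent_vertices:
  assumes "is_tree_comp D C" and C: "C = component_of D h0" "h0 \<in> darts D"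
  shows "card (vert D ` {h\<in>C. trivalent D h}) < card {h\<in>C. univalent D h}"
proof -
  let ?L = "{h\<in>C. univalent D h}" and ?T = "{h\<in>C. trivalent D h}"
  have sub: "C \<subseteq> darts D" using C component_of_subset by simp
  then have fin: "finite C" using finite_darts finite_subset by blast
  have "C = ?L \<union> ?T" "?L \<inter> ?T = {}"
    using sub univalent_or_trivalent unfolding univalent_def trivalent_def by auto
  then have "card C = card ?L + card ?T"
    using fin by (metis card_Un_disjoint finite_Un)
  also have "card ?T = 3 * card (vert D ` ?T)"
    using fin sub C rot_in_component_of trivalent_rot by (intro card_trivalent_darts) auto
  finally have tree: "(card ?L + 3 * card (vert D ` ?T)) div 2 + 1 = card ?L + card (vert D ` ?T)"
    using assms(1) card_vert_image[OF fin sub] unfolding is_tree_comp_def vertices_in_def by simp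
  have halve: "2 * (n div 2) + n mod 2 = n" "n mod 2 < 2" for n :: nat
    by simp_all
  show ?thesis
    using tree halve[of "card ?L + 3 * card (vert D ` ?T)"] by linarith
qed

lemma leaf_partner_trivalent:
  assumes t: "trivalent D t" and h: "h \<in> component_of D t" "univalent D h"
  shows "trivalent D (edg D h)"
proof (rule ccontr)
  assume "\<not> trivalent D (edg D h)"
  moreover have "edg D h \<in> darts D"
    using h(2) edg_in_darts unfolding univalent_def by blast
  ultimately have "univalent D (edg D h)"
    using univalent_or_trivalent by blast
  moreover have "(t, h) \<in> (steps D)\<^sup>*"
    using h(1) unfolding component_of_def by blast
  ultimately have "t \<in> {h, edg D h}"
    using rtrancl_steps_strut_iff[OF h(2)] by blast
  then show False
    using t h(2) \<open>univalent D (edg D h)\<close> unfolding univalent_def trivalent_def by blast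
qed

text \<open>A tree component has more leaves than trivalent vertices, so by pigeonhole two
  leaves hang at the same trivalent vertex.\<close>

lemma exists_cherry:
  assumes t: "trivalent D t" and tree: "is_tree_comp D (component_of D t)"
  shows "\<exists>p. is_cherry D p"
proof -
  define C where "C = component_of D t"
  define L where "L = {h\<in>C. univalent D h}"
  define T where "T = {h\<in>C. trivalent D h}"
  have "t \<in> darts D" using t unfolding trivalent_def by blast
  then have "C \<subseteq> darts D" unfolding C_def using component_of_subset by blast
  then have "finite C" using finite_darts finite_subset by blast
  then have fin: "finite L" "finite T" unfolding L_def T_def by simp_all
  have partner: "vert D (edg D h) \<in> vert D ` T" if "h \<in> L" for h
  proof -
    have "edg D h \<in> C"
      using that edg_in_component_of \<open>C \<subseteq> darts D\<close> unfolding L_def C_def by blast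
    moreover have "trivalent D (edg D h)"
      using that leaf_partner_trivalent[OF t] unfolding L_def C_def by blast
    ultimately show ?thesis unfolding T_def by blast
  qed
  have "card ((\<lambda>h. vert D (edg D h)) ` L) \<le> card (vert D ` T)"
    using partner fin by (intro card_mono) auto
  also have "\<dots> < card L"
    using tree_component_fewer_trivalent_vertices[OF tree _ \<open>t \<in> darts D\<close>]
    unfolding L_def T_def C_def by blast
  finally obtain h1 h2 where h12: "h1 \<in> L" "h2 \<in> L" "h1 \<noteq> h2"
    and same_vertex: "vert D (edg D h1) = vert D (edg D h2)"
    using pigeonhole unfolding inj_on_def by blast
  define e1 where "e1 = edg D h1"
  define e2 where "e2 = edg D h2"
  have h12d: "h1 \<in> darts D" "h2 \<in> darts D"
    using h12 \<open>C \<subseteq> darts D\<close> unfolding L_def by auto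
  have e1: "trivalent D e1" "univalent D (edg D e1)"
    using h12 h12d leaf_partner_trivalent[OF t] unfolding e1_def L_def C_def by auto
  have e2: "trivalent D e2" "univalent D (edg D e2)"
    using h12 h12d leaf_partner_trivalent[OF t] unfolding e2_def L_def C_def by auto
  have "e1 \<noteq> e2"
    using h12 h12d edg_eq_iff unfolding e1_def e2_def by blast
  moreover have "e2 \<in> vert D e1"
    using same_vertex unfolding e1_def e2_def vert_def by auto
  ultimately have "e2 = rot D e1 \<or> e1 = rot D e2"
    using trivalent_rot3[OF e1(1)] unfolding vert_def by auto
  then show ?thesis
    using e1 e2 unfolding is_cherry_def by auto
qed

lemma trivalent_dart_in_large_component:
  assumes "C \<in> components D" and "card (vertices_in D C) > 2"
  shows "\<exists>t\<in>C. trivalent D t"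
proof (rule ccontr)
  assume no_trivalent: "\<not> ?thesis"
  obtain h where h: "h \<in> darts D" "C = component_of D h"
    using assms(1) unfolding components_def by blast
  then have univ: "univalent D x" if "x \<in> C" for x
    using that no_trivalent univalent_or_trivalent component_of_subset by blast
  have "h \<in> C" "edg D h \<in> C"
    using h self_in_component_of edg_in_component_of by auto
  then have "C \<subseteq> {h, edg D h}"
    using h(2) univ component_of_strut by blast
  then have "vertices_in D C \<subseteq> {{h}, {edg D h}}"
    using univ vert_univalent unfolding vertices_in_def by blast
  then have "card (vertices_in D C) \<le> card {{h}, {edg D h}}"
    by (rule card_mono[rotated]) simp
  also have "\<dots> \<le> 2"
    by (simp add: card_insert_if)
  finally show False using assms(2) by simp
qed

end

section \<open>Isomorphisms, AS and relation sums\<close>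

lemma rtrancl_steps_map:
  assumes compat: "\<And>h. h \<in> darts X \<Longrightarrow> f (edg X h) = edg Y (f h) \<and> f (rot X h) = rot Y (f h)"
    and maps: "f ` darts X \<subseteq> darts Y" and path: "(x, z) \<in> (steps X)\<^sup>*"
  shows "(f x, f z) \<in> (steps Y)\<^sup>*"
  using path
proof (induction rule: rtrancl_induct)
  case (step y z)
  from step.hyps(2) have y: "y \<in> darts X" and "z = edg X y \<or> z = rot X y"
    unfolding steps_def by blast+
  then have "f z = edg Y (f y) \<or> f z = rot Y (f y)" using compat by auto
  moreover have "f y \<in> darts Y" using y maps by blast
  ultimately have "(f y, f z) \<in> steps Y" unfolding steps_def by blast
  with step.IH show ?case by (rule rtrancl_into_rtrancl)
qed simp

lemma wf_graph_iso:
  assumes "wf_graph X"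
    and bij: "bij_betw f (darts X) (darts Y)"
    and compat: "\<And>h. h \<in> darts X \<Longrightarrow> f (edg X h) = edg Y (f h) \<and> f (rot X h) = rot Y (f h)"
  shows "wf_graph Y"
proof -
  interpret X: wf_diagram X by unfold_locales (rule assms(1))
  have inj: "inj_on f (darts X)" and img: "f ` darts X = darts Y"
    using bij unfolding bij_betw_def by auto
  have edg_f: "edg Y (f h) = f (edg X h)" and rot_f: "rot Y (f h) = f (rot X h)"
    if "h \<in> darts X" for h
    using compat[OF that] by simp_all
  have f_eq_iff: "f x = f y \<longleftrightarrow> x = y" if "x \<in> darts X" "y \<in> darts X" for x y
    using inj that by (meson inj_onD)
  have f_in: "f h \<in> darts Y" if "h \<in> darts X" for h
    using that img by blast
  have f_onto: "\<exists>h\<in>darts X. y = f h" if "y \<in> darts Y" for y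
    using that img by (metis imageE)
  have fin: "finite (darts Y)"
    unfolding img[symmetric] using X.finite_darts by simp
  have univalent_iff: "univalent Y (f h) \<longleftrightarrow> univalent X h" if h: "h \<in> darts X" for h
    unfolding univalent_def
    using rot_f[OF h] f_eq_iff[OF X.rot_in_darts[OF h] h] f_in[OF h] h by simp
  have edg: "edg Y y \<in> darts Y \<and> edg Y y \<noteq> y \<and> edg Y (edg Y y) = y" if y: "y \<in> darts Y" for y
  proof -
    obtain h where h: "h \<in> darts X" "y = f h" using f_onto[OF y] by blast
    have e: "edg X h \<in> darts X" using X.edg_in_darts[OF h(1)] .
    show ?thesis
      unfolding h(2) edg_f[OF h(1)] edg_f[OF e] X.edg_edg[OF h(1)]
      using f_in[OF e] f_eq_iff[OF e h(1)] X.edg_neq[OF h(1)] by simp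
  qed
  have rot_in: "rot Y y \<in> darts Y" if y: "y \<in> darts Y" for y
  proof -
    obtain h where h: "h \<in> darts X" "y = f h" using f_onto[OF y] by blast
    show ?thesis
      unfolding h(2) rot_f[OF h(1)] using f_in X.rot_in_darts h(1) by blast
  qed
  have inj_rot: "inj_on (rot Y) (darts Y)"
  proof (rule inj_onI)
    fix y1 y2 assume y: "y1 \<in> darts Y" "y2 \<in> darts Y" "rot Y y1 = rot Y y2"
    obtain h1 where h1: "h1 \<in> darts X" "y1 = f h1" using f_onto[OF y(1)] by blast
    obtain h2 where h2: "h2 \<in> darts X" "y2 = f h2" using f_onto[OF y(2)] by blast
    have "f (rot X h1) = f (rot X h2)"
      using y(3) unfolding h1(2) h2(2) rot_f[OF h1(1)] rot_f[OF h2(1)] .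
    then have "rot X h1 = rot X h2"
      using f_eq_iff[OF X.rot_in_darts[OF h1(1)] X.rot_in_darts[OF h2(1)]] by blast
    then show "y1 = y2" using h1 h2 X.rot_inj by blast
  qed
  moreover have "rot Y ` darts Y = darts Y"
    using endo_inj_surj[OF fin _ inj_rot] rot_in by blast
  ultimately have rot_bij: "bij_betw (rot Y) (darts Y) (darts Y)"
    unfolding bij_betw_def by blast
  have rot_order: "rot Y y = y \<or> rot Y (rot Y (rot Y y)) = y" if y: "y \<in> darts Y" for y
  proof -
    obtain h where h: "h \<in> darts X" "y = f h" using f_onto[OF y] by blast
    have "rot X h = h \<or> rot X (rot X (rot X h)) = h"
      using X.univalent_or_trivalent[OF h(1)] X.trivalent_rot3 unfolding univalent_def by blast
    then show ?thesis
      unfolding h(2) using rot_f X.rot_in_darts h(1) by auto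
  qed
  have component: "\<exists>z\<in>component_of Y y. univalent Y z" if y: "y \<in> darts Y" for y
  proof -
    obtain h where h: "h \<in> darts X" "y = f h" using f_onto[OF y] by blast
    obtain h' where h': "(h, h') \<in> (steps X)\<^sup>*" "univalent X h'"
      using assms(1) h(1) unfolding wf_graph_def component_of_def by blast
    then have "(y, f h') \<in> (steps Y)\<^sup>*"
      using rtrancl_steps_map[OF compat] img h(2) by blast
    moreover have "univalent Y (f h')"
      using h'(2) univalent_iff unfolding univalent_def by blast
    ultimately show ?thesis unfolding component_of_def by blast
  qed
  show ?thesis
    unfolding wf_graph_def using fin edg rot_bij rot_order component by blast
qed

lemma is_diagram_iso:
  assumes X: "is_diagram k X" and iso: "diag_iso X Y"
  shows "is_diagram k Y"
proof -
  obtain f where bij: "bij_betw f (darts X) (darts Y)"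
    and compat: "\<And>h. h \<in> darts X \<Longrightarrow> f (edg X h) = edg Y (f h) \<and> f (rot X h) = rot Y (f h)"
    and colours: "\<And>h. univalent X h \<Longrightarrow> col Y (f h) = col X h"
    using iso unfolding diag_iso_def by blast
  have wf: "wf_graph X" using X unfolding is_diagram_def by blast
  interpret X: wf_diagram X by unfold_locales (rule wf)
  have "\<exists>c\<in>{1..k}. col Y y = Some c" if y: "univalent Y y" for y
  proof -
    have "y \<in> f ` darts X" using y bij unfolding univalent_def bij_betw_def by blast
    then obtain h where h: "h \<in> darts X" "y = f h" by blast
    have "f (rot X h) = f h"
      using y compat[OF h(1)] unfolding h(2) univalent_def by simp
    then have "rot X h = h"
      using bij_betw_imp_inj_on[OF bij] X.rot_in_darts[OF h(1)] h(1) by (meson inj_onD)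
    then have "univalent X h" using h(1) unfolding univalent_def by blast
    then show ?thesis using X colours unfolding h(2) is_diagram_def by simp
  qed
  then show ?thesis
    using wf_graph_iso[OF wf bij compat] unfolding is_diagram_def by blast
qed

lemma iso_diff_in_lin_span:
  assumes "is_diagram k X" and "diag_iso X Y"
  shows "(\<lambda>Z. delta Y Z - delta X Z) \<in> lin_span (rels_cl k)"
proof -
  have "(\<lambda>Z. delta X Z - delta Y Z) \<in> lin_span (rels_cl k)"
    using rels_csl.iso[OF assms(1) is_diagram_iso[OF assms] assms(2)]
    by (intro lin_span_base rels_cl.csl)
  from lin_span_scale[OF this, of "-1"] show ?thesis by simp
qed

locale cherry_vertex =
  fixes X :: diagram and p :: nat
  assumes wf: "wf_graph X" and cherry: "is_cherry X p"
begin

sublocale wf_diagram X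
  by unfold_locales (rule wf)

definition q :: nat where "q = rot X p"
definition r :: nat where "r = rot X q"
definition a :: nat where "a = edg X p"
definition b :: nat where "b = edg X q"

lemma cherry_basics:
  shows p_trivalent: "trivalent X p" and univalent_a: "univalent X a" and univalent_b: "univalent X b"
    and rot_p: "rot X p = q" and rot_q: "rot X q = r" and rot_r: "rot X r = p"
    and edg_p: "edg X p = a" and edg_q: "edg X q = b"
  using cherry trivalent_rot3 unfolding is_cherry_def q_def r_def a_def b_def by auto

lemma cherry_in_darts: "p \<in> darts X" "q \<in> darts X" "r \<in> darts X" "a \<in> darts X" "b \<in> darts X"
  using trivalent_facts[OF p_trivalent] univalent_a univalent_b
  unfolding univalent_def q_def r_def by auto

lemma edg_a: "edg X a = p" and edg_b: "edg X b = q"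
  using cherry_in_darts unfolding a_def b_def by auto

lemma rot_a: "rot X a = a" and rot_b: "rot X b = b"
  using univalent_a univalent_b unfolding univalent_def by auto

lemma vert_p: "vert X p = {p, q, r}"
  unfolding vert_def q_def r_def by simp

lemma not_univalent_pqr: "\<not> univalent X p" "\<not> univalent X q" "\<not> univalent X r"
  using p_trivalent trivalent_rot[OF p_trivalent] trivalent_rot[OF trivalent_rot[OF p_trivalent]]
  unfolding univalent_def trivalent_def q_def r_def by auto

lemma cherry_distinct:
  "p \<noteq> q" "q \<noteq> r" "p \<noteq> r" "a \<noteq> b" "a \<noteq> p" "a \<noteq> q" "a \<noteq> r" "b \<noteq> p" "b \<noteq> q" "b \<noteq> r"
  "q \<noteq> p" "r \<noteq> q" "r \<noteq> p" "b \<noteq> a" "p \<noteq> a" "q \<noteq> a" "r \<noteq> a" "p \<noteq> b" "q \<noteq> b" "r \<noteq> b"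
proof -
  have "p \<noteq> q" "q \<noteq> r" "p \<noteq> r"
    using trivalent_facts[OF p_trivalent] unfolding q_def r_def by auto
  moreover have "a \<noteq> b" using edg_a edg_b calculation(1) by auto
  moreover have "a \<notin> {p, q, r}" "b \<notin> {p, q, r}"
    using univalent_a univalent_b not_univalent_pqr by auto
  ultimately show
    "p \<noteq> q" "q \<noteq> r" "p \<noteq> r" "a \<noteq> b" "a \<noteq> p" "a \<noteq> q" "a \<noteq> r" "b \<noteq> p" "b \<noteq> q" "b \<noteq> r"
    "q \<noteq> p" "r \<noteq> q" "r \<noteq> p" "b \<noteq> a" "p \<noteq> a" "q \<noteq> a" "r \<noteq> a" "p \<noteq> b" "q \<noteq> b" "r \<noteq> b"
    by auto
qed

text \<open>Exchanging the two leaves of the cherry, together with the darts p and q leading to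
  them, reverses the cyclic order at p.\<close>

lemma diag_iso_flip:
  assumes same_colour: "col X a = col X b"
  shows "diag_iso X (flip X p)"
proof -
  define F where "F = flip X p"
  have F: "darts F = darts X" "edg F = edg X" "col F = col X"
    "\<And>h. rot F h = (if h \<in> {p, q, r} then rot X (rot X h) else rot X h)"
    unfolding F_def flip_def vert_p by auto
  define f where "f h = (if h = a then b else if h = b then a else if h = p then q
    else if h = q then p else h)" for h
  have f_inv: "f (f h) = h" for h
    unfolding f_def using cherry_distinct by auto
  have "bij_betw f (darts X) (darts F)"
    unfolding F(1) using f_inv cherry_in_darts
    by (intro bij_betw_byWitness[where f' = f]) (auto simp: f_def)
  moreover have "f (edg X h) = edg F (f h)" if "h \<in> darts X" for h
  proof (cases "h \<in> {a, b, p, q}")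
    case True
    then consider "h = a" | "h = b" | "h = p" | "h = q" by blast
    then show ?thesis
      by cases (simp_all add: F f_def edg_a edg_b edg_p edg_q cherry_distinct)
  next
    case False
    have "h = edg X (edg X h)" using edg_edg[OF that] by simp
    then have "edg X h \<notin> {a, b, p, q}"
      using False edg_a edg_b edg_p edg_q by auto
    then show ?thesis using False unfolding F f_def by auto
  qed
  moreover have "f (rot X h) = rot F (f h)" if "h \<in> darts X" for h
  proof (cases "h \<in> {a, b, p, q, r}")
    case True
    then consider "h = a" | "h = b" | "h = p" | "h = q" | "h = r" by blast
    then show ?thesis
      by cases (simp_all add: F f_def rot_a rot_b rot_p rot_q rot_r cherry_distinct)
  next
    case False
    have "rot X h \<noteq> a" "rot X h \<noteq> b"
      using False rot_eq_univalent[OF univalent_a that] rot_eq_univalent[OF univalent_b that] by auto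
    moreover have "rot X h \<noteq> p" "rot X h \<noteq> q"
      using False rot_inj[OF that cherry_in_darts(3)] rot_inj[OF that cherry_in_darts(1)] rot_r rot_p
      by auto
    ultimately show ?thesis using False unfolding F f_def by auto
  qed
  moreover have "col F (f h) = col X h" if "univalent X h" for h
  proof -
    have "h \<noteq> p" "h \<noteq> q" using that not_univalent_pqr by auto
    then show ?thesis unfolding F f_def using same_colour by auto
  qed
  ultimately show ?thesis
    unfolding diag_iso_def F_def by blast
qed

end

lemma trivial_cl_cherry_same_colour:
  assumes X: "is_diagram k X" and cherry: "is_cherry X p"
    and same_colour: "col X (edg X p) = col X (edg X (rot X p))"
  shows "trivial_cl k X"
proof -
  have wf: "wf_graph X" using X unfolding is_diagram_def by blast
  interpret cherry_vertex X p by unfold_locales (fact wf, fact cherry)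
  have AS: "(\<lambda>Z. delta X Z + delta (flip X p) Z) \<in> lin_span (rels_cl k)"
    using rels_csl.AS[OF X p_trivalent] by (intro lin_span_base rels_cl.csl)
  have "col X a = col X b"
    using same_colour unfolding a_def b_def q_def .
  then have "(\<lambda>Z. delta (flip X p) Z - delta X Z) \<in> lin_span (rels_cl k)"
    using iso_diff_in_lin_span[OF X] diag_iso_flip by blast
  from lin_span_diff[OF AS this] have "(\<lambda>Z. 2 * delta X Z) \<in> lin_span (rels_cl k)"
    by simp
  then show ?thesis
    unfolding trivial_cl_def by (rule lin_span_cancel_scalar) simp
qed

lemma trivial_cl_of_relation_sum:
  fixes Y :: "'a \<Rightarrow> diagram"
  assumes X: "is_diagram k X" and fin: "finite W"
    and relation: "(\<lambda>Z. \<Sum>w\<in>W. delta (Y w) Z) \<in> lin_span (rels_cl k)"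
    and terms: "\<And>w. w \<in> W \<Longrightarrow> trivial_cl k (Y w) \<or> diag_iso X (Y w)"
    and copy: "w0 \<in> W" "diag_iso X (Y w0)"
  shows "trivial_cl k X"
proof -
  define c where "c w = (of_bool (diag_iso X (Y w)) :: real)" for w
  have term_in_span: "(\<lambda>Z. delta (Y w) Z - c w * delta X Z) \<in> lin_span (rels_cl k)" if "w \<in> W" for w
    using terms[OF that] iso_diff_in_lin_span[OF X]
    unfolding c_def trivial_cl_def by (cases "diag_iso X (Y w)") auto
  have "(\<lambda>Z. \<Sum>w\<in>W. delta (Y w) Z - c w * delta X Z) \<in> lin_span (rels_cl k)"
    using term_in_span by (rule lin_span_sum[OF fin])
  from lin_span_diff[OF relation this]
  have "(\<lambda>Z. (\<Sum>w\<in>W. c w) * delta X Z) \<in> lin_span (rels_cl k)"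
    by (simp add: sum_subtractf sum_distrib_right)
  moreover have "(\<Sum>w\<in>W. c w) \<noteq> 0"
    using fin copy unfolding c_def by (auto simp: card_gt_0_iff)
  ultimately show ?thesis
    unfolding trivial_cl_def by (rule lin_span_cancel_scalar)
qed

section \<open>Attaching a leaf\<close>

lemma univalent_in_component_transfer:
  assumes path: "(h, h') \<in> (steps E)\<^sup>*" and h': "univalent E h'" and h: "h \<in> darts Y"
    and kept_steps: "\<And>y z. (y, z) \<in> steps E \<Longrightarrow> y \<notin> M \<Longrightarrow> y \<in> darts Y
      \<Longrightarrow> (y, z) \<in> steps Y \<and> z \<in> darts Y"
    and modified: "\<And>y. y \<in> M \<Longrightarrow> \<exists>z\<in>component_of Y y. univalent Y z"
    and kept_univalent: "\<And>y. univalent E y \<Longrightarrow> y \<notin> M \<Longrightarrow> univalent Y y"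
  shows "\<exists>z\<in>component_of Y h. univalent Y z"
  using path h
proof (induction rule: converse_rtrancl_induct)
  case base
  show ?case
    using modified kept_univalent[OF h'] self_in_component_of by (cases "h' \<in> M") blast+
next
  case (step y z)
  show ?case
  proof (cases "y \<in> M")
    case True
    then show ?thesis using modified by blast
  next
    case False
    then have "(y, z) \<in> steps Y" "z \<in> darts Y"
      using kept_steps step.hyps(1) step.prems by blast+
    then show ?thesis using step.IH component_of_trans by blast
  qed
qed

locale attachment =
  fixes k :: nat and E :: diagram and u w n1 n2 :: nat
  assumes prediagram: "is_prediagram k E u"
    and leaf: "univalent E w" "w \<noteq> u"
    and fresh: "n1 \<notin> darts E" "n2 \<notin> darts E" "n1 \<noteq> n2"
begin

sublocale wf_diagram E
  by unfold_locales (use prediagram in \<open>simp add: is_prediagram_def\<close>)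

abbreviation attached :: diagram where
  "attached \<equiv> attach E u w n1 n2"

lemma darts_attach: "darts attached = darts E \<union> {n1, n2}"
  unfolding attach_def by simp

lemma edg_attach: "edg attached h =
    (if h = w then n1 else if h = n1 then w
     else if h = n2 then edg E w else if h = edg E w then n2 else edg E h)"
  unfolding attach_def by simp

lemma rot_attach: "rot attached h =
    (if h = u then n1 else if h = n1 then n2 else if h = n2 then u else rot E h)"
  unfolding attach_def by simp

lemma col_attach: "col attached = (col E)(u := None, n1 := None, n2 := None)"
  unfolding attach_def by simp

lemma attach_basics:
  shows univalent_u: "univalent E u" and u_in_darts: "u \<in> darts E"
    and w_in_darts: "w \<in> darts E" and edg_w_in_darts: "edg E w \<in> darts E"
    and rot_u: "rot E u = u" and edg_w_neq: "edg E w \<noteq> w" and edg_edg_w: "edg E (edg E w) = w"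
  using prediagram leaf edg_in_darts edg_neq unfolding is_prediagram_def univalent_def by auto

lemma attach_distinct:
  "w \<noteq> n1" "w \<noteq> n2" "u \<noteq> n1" "u \<noteq> n2" "edg E w \<noteq> n1" "edg E w \<noteq> n2"
  "n1 \<noteq> w" "n2 \<noteq> w" "n1 \<noteq> u" "n2 \<noteq> u" "n1 \<noteq> edg E w" "n2 \<noteq> edg E w"
  "w \<noteq> edg E w" "edg E w \<noteq> w" "n1 \<noteq> n2" "n2 \<noteq> n1" "w \<noteq> u" "u \<noteq> w"
  using attach_basics fresh leaf(2) by auto

lemma edg_attach_involution:
  assumes "h \<in> darts attached"
  shows "edg attached h \<in> darts attached \<and> edg attached h \<noteq> h \<and> edg attached (edg attached h) = h"
proof (cases "h \<in> {w, n1, n2, edg E w}")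
  case True
  then consider "h = w" | "h = n1" | "h = n2" | "h = edg E w" by blast
  then show ?thesis
    by cases (simp_all add: edg_attach darts_attach attach_distinct w_in_darts edg_w_in_darts
      edg_edg_w)
next
  case False
  then have h: "h \<in> darts E" using assms unfolding darts_attach by blast
  have "edg E h \<noteq> w"
  proof
    assume "edg E h = w"
    then have "edg E w = h" using edg_edg[OF h] by simp
    with False show False by simp
  qed
  moreover have "edg E h \<noteq> edg E w"
    using edg_eq_iff[OF h w_in_darts] False by simp
  moreover have "edg E h \<in> darts E" using edg_in_darts[OF h] .
  ultimately show ?thesis
    unfolding edg_attach darts_attach using False h fresh edg_neq[OF h] by auto
qed

lemma rot_outside_triangle:
  assumes "h \<in> darts E" "h \<noteq> u"
  shows "rot attached h = rot E h" "rot E h \<in> darts E" "rot E h \<notin> {u, n1, n2}"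
proof -
  show "rot attached h = rot E h"
    unfolding rot_attach using assms fresh by auto
  show "rot E h \<in> darts E" using rot_in_darts[OF assms(1)] .
  moreover have "rot E h \<noteq> u"
    using rot_eq_univalent[OF univalent_u assms(1)] assms(2) by blast
  ultimately show "rot E h \<notin> {u, n1, n2}" using fresh by auto
qed

lemma rot_attach_bij: "bij_betw (rot attached) (darts attached) (darts attached)"
proof -
  have "bij_betw (rot E) {u} {u}"
    using rot_u by (simp add: bij_betw_def)
  then have "bij_betw (rot E) (darts E - {u}) (darts E - {u})"
    using bij_betw_DiffI[OF rot_bij] u_in_darts by blast
  moreover have "rot attached h = rot E h" if "h \<in> darts E - {u}" for h
    using rot_outside_triangle(1) that by blast
  ultimately have outside: "bij_betw (rot attached) (darts E - {u}) (darts E - {u})"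
    using bij_betw_cong[of "darts E - {u}" "rot attached" "rot E"] by blast
  have "rot attached u = n1" "rot attached n1 = n2" "rot attached n2 = u"
    unfolding rot_attach using attach_distinct by simp_all
  then have "rot attached ` {u, n1, n2} = {n1, n2, u}"
    by simp
  also have "\<dots> = {u, n1, n2}"
    by blast
  finally have img: "rot attached ` {u, n1, n2} = {u, n1, n2}" .
  have "inj_on (rot attached) {u, n1, n2}"
    by (rule eq_card_imp_inj_on) (simp, simp only: img)
  then have triangle: "bij_betw (rot attached) {u, n1, n2} {u, n1, n2}"
    unfolding bij_betw_def using img by blast
  have "darts attached = (darts E - {u}) \<union> {u, n1, n2}"
    unfolding darts_attach using u_in_darts by blast
  moreover have "(darts E - {u}) \<inter> {u, n1, n2} = {}"
    using fresh by blast
  ultimately show ?thesis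
    using bij_betw_combine[OF outside triangle] by simp
qed

lemma rot_attach_order:
  assumes "h \<in> darts attached"
  shows "rot attached h = h \<or> rot attached (rot attached (rot attached h)) = h"
proof (cases "h \<in> {u, n1, n2}")
  case True
  then show ?thesis unfolding rot_attach using attach_distinct by auto
next
  case False
  then have h: "h \<in> darts E" "h \<noteq> u" using assms unfolding darts_attach by auto
  note r1 = rot_outside_triangle[OF h]
  note r2 = rot_outside_triangle[of "rot E h", OF r1(2)]
  note r3 = rot_outside_triangle[of "rot E (rot E h)", OF r2(2)]
  have "rot E h = h \<or> rot E (rot E (rot E h)) = h"
    using univalent_or_trivalent[OF h(1)] trivalent_rot3 unfolding univalent_def by blast
  then show ?thesis using r1 r2 r3 by auto
qed

lemma univalent_attach_iff: "univalent attached h \<longleftrightarrow> univalent E h \<and> h \<noteq> u"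
proof (cases "h \<in> {u, n1, n2}")
  case True
  then show ?thesis
    unfolding univalent_def rot_attach using attach_distinct fresh by auto
next
  case False
  then show ?thesis
    unfolding univalent_def darts_attach using rot_outside_triangle(1) by auto
qed

lemma attach_component_has_univalent:
  assumes "h \<in> darts attached"
  shows "\<exists>z\<in>component_of attached h. univalent attached z"
proof -
  have w: "univalent attached w" using univalent_attach_iff leaf by blast
  have "(n1, w) \<in> steps attached" "(u, n1) \<in> steps attached"
    "(n2, u) \<in> steps attached" "(edg E w, n2) \<in> steps attached"
    unfolding steps_def darts_attach edg_attach rot_attach
    using attach_distinct u_in_darts edg_w_in_darts by auto
  then have "(y, w) \<in> (steps attached)\<^sup>*" if "y \<in> {w, edg E w, u, n1, n2}" for y
    using that by (auto intro: converse_rtrancl_into_rtrancl)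
  then have near_w: "\<exists>z\<in>component_of attached y. univalent attached z"
    if "y \<in> {w, edg E w, u, n1, n2}" for y
    using that w unfolding component_of_def by blast
  show ?thesis
  proof (cases "h \<in> {n1, n2}")
    case True
    then show ?thesis using near_w by blast
  next
    case False
    then have h: "h \<in> darts E" using assms unfolding darts_attach by blast
    obtain h' where h': "(h, h') \<in> (steps E)\<^sup>*" "univalent E h'"
      using prediagram h unfolding is_prediagram_def wf_graph_def component_of_def by blast
    show ?thesis
    proof (rule univalent_in_component_transfer[OF h' assms])
      fix y z assume step: "(y, z) \<in> steps E" "y \<notin> {w, edg E w, u}"
      then have "y \<in> darts E" "z \<in> darts E" "y \<noteq> n1" "y \<noteq> n2"
        using fresh steps_in_darts by auto
      moreover have "edg attached y = edg E y" "rot attached y = rot E y"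
        using step(2) calculation(3,4) unfolding edg_attach rot_attach by auto
      ultimately show "(y, z) \<in> steps attached \<and> z \<in> darts attached"
        using step(1) unfolding steps_def darts_attach by auto
    next
      show "\<exists>z\<in>component_of attached y. univalent attached z" if "y \<in> {w, edg E w, u}" for y
        using that near_w by blast
    next
      show "univalent attached y" if "univalent E y" "y \<notin> {w, edg E w, u}" for y
        using that univalent_attach_iff by blast
    qed
  qed
qed

theorem is_diagram_attach: "is_diagram k attached"
proof -
  have "\<exists>c\<in>{1..k}. col attached h = Some c" if "univalent attached h" for h
  proof -
    have "univalent E h" "h \<noteq> u" "h \<notin> {n1, n2}"
      using that fresh univalent_attach_iff unfolding univalent_def by auto
    then show ?thesis
      using prediagram unfolding col_attach is_prediagram_def by auto
  qed
  moreover have "finite (darts attached)"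
    unfolding darts_attach using finite_darts by simp
  ultimately show ?thesis
    unfolding is_diagram_def wf_graph_def
    using edg_attach_involution rot_attach_bij rot_attach_order attach_component_has_univalent
    by blast
qed

end

section \<open>Pruning and regrafting a bicoloured cherry\<close>

definition strut_darts :: "diagram \<Rightarrow> nat set" where
  "strut_darts D = {h\<in>darts D. univalent D h \<and> univalent D (edg D h)}"

definition non_strut_count :: "diagram \<Rightarrow> nat" where
  "non_strut_count D = card (darts D - strut_darts D)"

locale bicoloured_cherry = cherry_vertex X p for X :: diagram and p :: nat +
  fixes k :: nat and x y :: nat
  assumes diagram: "is_diagram k X"
    and colour_a: "col X (edg X p) = Some x" and colour_b: "col X (edg X (rot X p)) = Some y"
    and colours_differ: "x \<noteq> y"
begin

lemma col_a: "col X a = Some x" and col_b: "col X b = Some y"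
  using colour_a colour_b unfolding a_def b_def q_def by auto

text \<open>Pruning joins the leaves a and b into a strut and leaves r as the uncoloured
  univalent dart u of relation (*).\<close>

definition pruned :: diagram where
  "pruned = X\<lparr>darts := darts X - {p, q}, edg := (edg X)(a := b, b := a),
    rot := (rot X)(r := r), col := (col X)(r := None)\<rparr>"

lemma pruned_fields:
  "darts pruned = darts X - {p, q}" "edg pruned = (edg X)(a := b, b := a)"
  "rot pruned = (rot X)(r := r)" "col pruned = (col X)(r := None)"
  unfolding pruned_def by simp_all

lemma edg_pruned_involution:
  assumes "h \<in> darts pruned"
  shows "edg pruned h \<in> darts pruned \<and> edg pruned h \<noteq> h \<and> edg pruned (edg pruned h) = h"
proof (cases "h \<in> {a, b}")
  case True
  then show ?thesis
    unfolding pruned_fields using cherry_in_darts cherry_distinct by auto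
next
  case False
  then have h: "h \<in> darts X" "h \<notin> {p, q, a, b}" using assms unfolding pruned_fields by auto
  then have "edg X h \<notin> {p, q, a, b}"
    using edg_edg edg_a edg_b edg_p edg_q by (metis insertCI insertE singletonD)
  then show ?thesis
    unfolding pruned_fields using h edg_in_darts edg_neq by auto
qed

lemma rot_pruned_bij: "bij_betw (rot pruned) (darts pruned) (darts pruned)"
proof -
  let ?O = "darts X - vert X p"
  have "bij_betw (rot X) ?O ?O"
    using rot_bij_outside_vert cherry_in_darts(1) by blast
  moreover have "rot pruned h = rot X h" if "h \<in> ?O" for h
    using that unfolding pruned_fields vert_p by auto
  ultimately have outside: "bij_betw (rot pruned) ?O ?O"
    using bij_betw_cong by blast
  have fixed: "bij_betw (rot pruned) {r} {r}"
    unfolding pruned_fields by (simp add: bij_betw_def)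
  have "?O \<inter> {r} = {}"
    unfolding vert_p by blast
  then have "bij_betw (rot pruned) (?O \<union> {r}) (?O \<union> {r})"
    using bij_betw_combine[OF outside fixed] by blast
  moreover have "darts pruned = ?O \<union> {r}"
    unfolding pruned_fields vert_p using cherry_in_darts cherry_distinct by auto
  ultimately show ?thesis by simp
qed

lemma rot_pruned_order:
  assumes "h \<in> darts pruned"
  shows "rot pruned h = h \<or> rot pruned (rot pruned (rot pruned h)) = h"
proof (cases "h = r")
  case True
  then show ?thesis unfolding pruned_fields by simp
next
  case False
  then have h: "h \<in> darts X - vert X p" using assms unfolding pruned_fields vert_p by auto
  have outside: "rot X g \<in> darts X - vert X p" "rot pruned g = rot X g" if "g \<in> darts X - vert X p" for g
    using that rot_bij_outside_vert[OF cherry_in_darts(1)] unfolding bij_betw_def pruned_fields vert_p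
    by auto
  have "rot X h = h \<or> rot X (rot X (rot X h)) = h"
    using univalent_or_trivalent trivalent_rot3 h unfolding univalent_def by blast
  then show ?thesis using outside h by metis
qed

lemma univalent_pruned_iff:
  assumes "h \<notin> {p, q}"
  shows "univalent pruned h \<longleftrightarrow> univalent X h \<or> h = r"
  using assms cherry_in_darts unfolding univalent_def pruned_fields by auto

lemma steps_into_pq:
  assumes "(g, g') \<in> steps X" and "g' \<in> {p, q}"
  shows "g \<in> {a, b, r, p}"
proof -
  from assms(1) have g: "g \<in> darts X" and "g' = edg X g \<or> g' = rot X g"
    unfolding steps_def by blast+
  then consider "edg X g = p" | "edg X g = q" | "rot X g = p" | "rot X g = q"
    using assms(2) by blast
  then show ?thesis
  proof cases
    case 1
    then have "g = edg X p" using edg_edg[OF g] by simp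
    then show ?thesis unfolding edg_p by simp
  next
    case 2
    then have "g = edg X q" using edg_edg[OF g] by simp
    then show ?thesis unfolding edg_q by simp
  next
    case 3
    then have "g = r" using rot_inj[OF g cherry_in_darts(3)] rot_r by simp
    then show ?thesis by simp
  next
    case 4
    then have "g = p" using rot_inj[OF g cherry_in_darts(1)] rot_p by simp
    then show ?thesis by simp
  qed
qed

lemma pruned_component_has_univalent:
  assumes h: "h \<in> darts pruned"
  shows "\<exists>z\<in>component_of pruned h. univalent pruned z"
proof -
  obtain h' where h': "(h, h') \<in> (steps X)\<^sup>*" "univalent X h'"
    using diagram h unfolding pruned_fields is_diagram_def wf_graph_def component_of_def by blast
  show ?thesis
  proof (rule univalent_in_component_transfer[OF h' h])
    fix g g' assume step: "(g, g') \<in> steps X" "g \<notin> {a, b, r}" "g \<in> darts pruned"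
    then have g: "g \<in> darts X" "g \<notin> {p, q, a, b, r}"
      unfolding pruned_fields by auto
    have "g' \<notin> {p, q}" using steps_into_pq[OF step(1)] g(2) by blast
    moreover have "edg pruned g = edg X g" "rot pruned g = rot X g"
      using g(2) unfolding pruned_fields by auto
    moreover have "g' \<in> darts X" using steps_in_darts[OF step(1)] by blast
    ultimately show "(g, g') \<in> steps pruned \<and> g' \<in> darts pruned"
      using step(1,3) unfolding steps_def pruned_fields(1) by auto
  next
    show "\<exists>z\<in>component_of pruned g. univalent pruned z" if "g \<in> {a, b, r}" for g
    proof -
      have "g \<notin> {p, q}" using that cherry_distinct by auto
      then have "univalent pruned g"
        using that univalent_pruned_iff univalent_a univalent_b by auto
      then show ?thesis using self_in_component_of by blast
    qed
  next
    show "univalent pruned g" if "univalent X g" "g \<notin> {a, b, r}" for g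
    proof -
      have "g \<notin> {p, q}" using that(1) not_univalent_pqr by auto
      then show ?thesis using univalent_pruned_iff that(1) by blast
    qed
  qed
qed

lemma is_prediagram_pruned: "is_prediagram k pruned r"
proof -
  have "univalent pruned r"
    using univalent_pruned_iff cherry_distinct by auto
  moreover have "\<exists>c\<in>{1..k}. col pruned h = Some c" if "univalent pruned h" "h \<noteq> r" for h
    using that diagram univalent_pruned_iff unfolding is_diagram_def pruned_fields univalent_def by auto
  moreover have "finite (darts pruned)"
    unfolding pruned_fields using finite_darts by simp
  ultimately show ?thesis
    unfolding is_prediagram_def wf_graph_def pruned_fields(4)
    using edg_pruned_involution rot_pruned_bij rot_pruned_order pruned_component_has_univalent by auto
qed

definition x_leaves :: "nat set" where
  "x_leaves = {w. univalent pruned w \<and> col pruned w = Some x}"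

definition regraft :: "nat \<Rightarrow> diagram" where
  "regraft w = attach pruned r w p q"

lemma x_leaves_facts:
  assumes "w \<in> x_leaves"
  shows "univalent X w" "col X w = Some x" "w \<notin> {p, q, r, b}"
proof -
  have w: "univalent pruned w" "col pruned w = Some x"
    using assms unfolding x_leaves_def by auto
  then have "w \<noteq> r" unfolding pruned_fields by auto
  moreover have "w \<notin> {p, q}" using w(1) unfolding univalent_def pruned_fields by auto
  ultimately show "univalent X w" "col X w = Some x"
    using w univalent_pruned_iff unfolding pruned_fields by auto
  then show "w \<notin> {p, q, r, b}"
    using not_univalent_pqr col_b colours_differ by auto
qed

lemma a_in_x_leaves: "a \<in> x_leaves"
  unfolding x_leaves_def
  using univalent_pruned_iff univalent_a cherry_distinct col_a by (auto simp: pruned_fields)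

lemma finite_x_leaves: "finite x_leaves"
  using x_leaves_facts finite_darts unfolding univalent_def
  by (metis (no_types, lifting) finite_subset subsetI)

lemma star_relation: "(\<lambda>Z. \<Sum>w\<in>x_leaves. delta (regraft w) Z) \<in> lin_span (rels_cl k)"
proof -
  have "x \<in> {1..k}"
    using diagram univalent_a col_a unfolding is_diagram_def by auto
  moreover have "p \<notin> darts pruned" "q \<notin> darts pruned"
    unfolding pruned_fields by blast+
  ultimately have "(\<lambda>Z. \<Sum>w\<in>{w. univalent pruned w \<and> col pruned w = Some x}.
      delta (attach pruned r w p q) Z) \<in> rels_cl k"
    using rels_cl.star[OF is_prediagram_pruned] cherry_distinct(1) by blast
  then show ?thesis
    unfolding regraft_def x_leaves_def by (rule lin_span_base)
qed

lemma attachment_regraft: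
  assumes "w \<in> x_leaves"
  shows "attachment k pruned r w p q"
proof (rule attachment.intro)
  show "is_prediagram k pruned r" by (rule is_prediagram_pruned)
  show "univalent pruned w" using assms unfolding x_leaves_def by blast
  show "w \<noteq> r" using x_leaves_facts(3)[OF assms] by blast
  show "p \<notin> darts pruned" "q \<notin> darts pruned" unfolding pruned_fields by blast+
  show "p \<noteq> q" by (rule cherry_distinct(1))
qed

lemma is_diagram_regraft: "w \<in> x_leaves \<Longrightarrow> is_diagram k (regraft w)"
  unfolding regraft_def using attachment.is_diagram_attach attachment_regraft by blast

lemma regraft_fields:
  shows "darts (regraft w) = darts X" and "rot (regraft w) = rot X"
    and "col (regraft w) = (col X)(r := None, p := None, q := None)"
proof -
  show "darts (regraft w) = darts X"
    unfolding regraft_def attach_def pruned_fields using cherry_in_darts by auto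
  show "rot (regraft w) = rot X"
    unfolding regraft_def attach_def pruned_fields using rot_p rot_q rot_r by auto
  show "col (regraft w) = (col X)(r := None, p := None, q := None)"
    unfolding regraft_def attach_def pruned_fields by auto
qed

lemma univalent_regraft_iff: "univalent (regraft w) h \<longleftrightarrow> univalent X h"
  unfolding univalent_def regraft_fields ..

lemma col_regraft: "univalent X h \<Longrightarrow> col (regraft w) h = col X h"
  using not_univalent_pqr unfolding regraft_fields by auto

lemma edg_regraft_a: "edg (regraft a) = edg X"
proof
  fix h show "edg (regraft a) h = edg X h"
    unfolding regraft_def attach_def pruned_fields
    using cherry_distinct edg_a edg_b edg_p edg_q by auto
qed

lemma diag_iso_regraft_a: "diag_iso X (regraft a)"
  unfolding diag_iso_def
  using edg_regraft_a regraft_fields(1,2) col_regraft by (intro exI[of _ id]) auto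

lemma edg_other_leaf:
  assumes "w \<in> x_leaves" "w \<noteq> a"
  shows "edg X w \<in> darts X" "edg X w \<notin> {p, q, a, b, w}" "edg X (edg X w) = w"
proof -
  have w: "w \<in> darts X" "w \<notin> {p, q, r, b}"
    using x_leaves_facts[OF assms(1)] unfolding univalent_def by auto
  show "edg X w \<in> darts X" "edg X (edg X w) = w"
    using w(1) edg_in_darts by auto
  have "edg X w \<noteq> p" using assms(2) edg_edg[OF w(1)] edg_p by metis
  moreover have "edg X w \<noteq> q" using w(2) edg_edg[OF w(1)] edg_q by auto
  moreover have "edg X w \<noteq> a" using w(2) edg_edg[OF w(1)] edg_a by auto
  moreover have "edg X w \<noteq> b" using w(2) edg_edg[OF w(1)] edg_b by auto
  ultimately show "edg X w \<notin> {p, q, a, b, w}"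
    using edg_neq[OF w(1)] by auto
qed

lemma edg_regraft:
  assumes "w \<in> x_leaves" "w \<noteq> a"
  shows "edg (regraft w) h = (if h = w then p else if h = p then w
    else if h = q then edg X w else if h = edg X w then q
    else if h = a then b else if h = b then a else edg X h)"
proof -
  have w: "w \<noteq> a" "w \<noteq> b" "w \<noteq> p" "w \<noteq> q" "p \<noteq> w" "q \<noteq> w"
    using assms x_leaves_facts(3)[OF assms(1)] by auto
  then have "edg pruned w = edg X w" unfolding pruned_fields by simp
  then show ?thesis
    unfolding regraft_def attach_def using edg_other_leaf[OF assms] w cherry_distinct
    by (simp add: pruned_fields)
qed

lemma trivial_cl_regraft_same_colour:
  assumes w: "w \<in> x_leaves" "w \<noteq> a"
    and partner: "univalent X (edg X w)" "col X (edg X w) = Some x"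
  shows "trivial_cl k (regraft w)"
proof (rule trivial_cl_cherry_same_colour[OF is_diagram_regraft[OF w(1)]])
  have edg_pq: "edg (regraft w) p = w" "edg (regraft w) (rot (regraft w) p) = edg X w"
    unfolding regraft_fields rot_p edg_regraft[OF w]
    using edg_other_leaf[OF w] x_leaves_facts(3)[OF w(1)] cherry_distinct by auto
  show "is_cherry (regraft w) p"
    unfolding is_cherry_def edg_pq trivalent_def univalent_regraft_iff
    using p_trivalent x_leaves_facts[OF w(1)] partner(1)
    unfolding regraft_fields trivalent_def by auto
  show "col (regraft w) (edg (regraft w) p) = col (regraft w) (edg (regraft w) (rot (regraft w) p))"
    unfolding edg_pq using col_regraft x_leaves_facts[OF w(1)] partner by simp
qed

text \<open>If the partner of w has the colour of b, regrafting merely exchanges the roles of the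
  struts a--b and w--(edg X w).\<close>

lemma diag_iso_regraft_other_colour:
  assumes w: "w \<in> x_leaves" "w \<noteq> a"
    and partner: "univalent X (edg X w)" "col X (edg X w) = Some y"
  shows "diag_iso X (regraft w)"
proof -
  define w' where "w' = edg X w"
  have w': "w' \<in> darts X" "w' \<notin> {p, q, a, b, w}" "edg X w = w'" "edg X w' = w"
    using edg_other_leaf[OF w] unfolding w'_def by auto
  have w_facts: "univalent X w" "col X w = Some x" "w \<notin> {p, q, r, b}"
    using x_leaves_facts[OF w(1)] by auto
  have ne: "a \<noteq> b" "a \<noteq> w" "a \<noteq> w'" "a \<noteq> p" "a \<noteq> q" "b \<noteq> w" "b \<noteq> w'" "b \<noteq> p"
    "b \<noteq> q" "w \<noteq> w'" "w \<noteq> p" "w \<noteq> q" "w' \<noteq> p" "w' \<noteq> q" "p \<noteq> q"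
    using w' w_facts(3) w(2) cherry_distinct by auto
  note ne_sym = ne[THEN not_sym]
  have univalent_abww: "univalent X g" if "g \<in> {a, b, w, w'}" for g
    using that univalent_a univalent_b w_facts(1) partner(1) unfolding w'_def by auto
  define f where "f h = (if h = a then w else if h = w then a else if h = b then w'
    else if h = w' then b else h)" for h
  have f_vals: "f a = w" "f w = a" "f b = w'" "f w' = b" "f p = p" "f q = q"
    unfolding f_def using ne ne_sym by simp_all
  have f_other: "f h = h" if "h \<notin> {a, b, w, w'}" for h
    using that unfolding f_def by auto
  have edg_vals: "edg (regraft w) w = p" "edg (regraft w) p = w" "edg (regraft w) q = w'"
    "edg (regraft w) w' = q" "edg (regraft w) a = b" "edg (regraft w) b = a"
    unfolding edg_regraft[OF w] w'(3) using ne ne_sym by simp_all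
  have edg_other: "edg (regraft w) h = edg X h" if "h \<notin> {a, b, w, w', p, q}" for h
    using that unfolding edg_regraft[OF w] w'(3) by auto
  have f_inv: "f (f h) = h" for h
  proof (cases "h \<in> {a, b, w, w'}")
    case True
    then show ?thesis using f_vals by auto
  next
    case False
    then show ?thesis using f_other by simp
  qed
  have f_in: "f h \<in> darts X" if "h \<in> darts X" for h
  proof (cases "h \<in> {a, b, w, w'}")
    case True
    then have "f h \<in> {a, b, w, w'}" using f_vals by auto
    then show ?thesis using univalent_abww unfolding univalent_def by blast
  next
    case False
    then show ?thesis using f_other that by simp
  qed
  have "bij_betw f (darts X) (darts (regraft w))"
    unfolding regraft_fields using f_inv f_in by (intro bij_betw_byWitness[where f' = f]) auto
  moreover have "f (edg X h) = edg (regraft w) (f h)" if h: "h \<in> darts X" for h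
  proof (cases "h \<in> {a, b, w, w', p, q}")
    case True
    then show ?thesis
      using f_vals edg_vals edg_a edg_b edg_p edg_q w'(3,4) by auto
  next
    case False
    have "h = edg X (edg X h)" using edg_edg[OF h] by simp
    then have "edg X h \<notin> {a, b, w, w', p, q}"
      using False edg_a edg_b edg_p edg_q w'(3,4) by auto
    then show ?thesis using False f_other edg_other by auto
  qed
  moreover have "f (rot X h) = rot (regraft w) (f h)" if h: "h \<in> darts X" for h
  proof (cases "h \<in> {a, b, w, w'}")
    case True
    then have "rot X h = h" "rot X (f h) = f h"
      using univalent_abww f_vals unfolding univalent_def by auto
    then show ?thesis unfolding regraft_fields by simp
  next
    case False
    have "rot X h \<notin> {a, b, w, w'}"
      using False rot_eq_univalent[OF _ h] univalent_abww by blast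
    then show ?thesis using False f_other unfolding regraft_fields by simp
  qed
  moreover have "col (regraft w) (f h) = col X h" if "univalent X h" for h
  proof (cases "h \<in> {a, b, w, w'}")
    case True
    then have "univalent X (f h)" using f_vals univalent_abww by auto
    moreover have "col X (f h) = col X h"
      using True f_vals col_a col_b w_facts(2) partner(2) unfolding w'_def by auto
    ultimately show ?thesis using col_regraft by simp
  next
    case False
    then show ?thesis using f_other col_regraft that by simp
  qed
  ultimately show ?thesis
    unfolding diag_iso_def by blast
qed

text \<open>Regrafting onto a leaf w whose partner is trivalent keeps every strut of X and turns
  the leaves a, b of the cherry into a new one.\<close>

lemma regraft_fewer_non_struts:
  assumes w: "w \<in> x_leaves" "w \<noteq> a" and partner: "\<not> univalent X (edg X w)"
  shows "non_strut_count (regraft w) < non_strut_count X"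
proof -
  have "strut_darts X \<subseteq> strut_darts (regraft w)"
  proof
    fix h assume "h \<in> strut_darts X"
    then have h: "h \<in> darts X" "univalent X h" "univalent X (edg X h)"
      unfolding strut_darts_def by auto
    have "h \<notin> {p, q, a, b, w, edg X w}"
      using h(2,3) partner not_univalent_pqr edg_a edg_b by auto
    then have "edg (regraft w) h = edg X h"
      unfolding edg_regraft[OF w] by auto
    then show "h \<in> strut_darts (regraft w)"
      using h unfolding strut_darts_def regraft_fields univalent_regraft_iff by auto
  qed
  moreover have "a \<in> strut_darts (regraft w)"
  proof -
    have "a \<noteq> w" "a \<noteq> p" "a \<noteq> q" "a \<noteq> edg X w"
      using w(2) cherry_distinct edg_other_leaf[OF w] by auto
    then have "edg (regraft w) a = b" unfolding edg_regraft[OF w] by simp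
    then show ?thesis
      using cherry_in_darts univalent_a univalent_b
      unfolding strut_darts_def regraft_fields univalent_regraft_iff by simp
  qed
  moreover have "a \<notin> strut_darts X"
    using edg_a not_univalent_pqr unfolding strut_darts_def by simp
  ultimately have "darts (regraft w) - strut_darts (regraft w) \<subset> darts X - strut_darts X"
    using cherry_in_darts(4) unfolding regraft_fields by blast
  then show ?thesis
    unfolding non_strut_count_def using finite_darts by (simp add: psubset_card_mono)
qed

lemma regraft_trivial_or_iso:
  assumes two: "k = 2" and w: "w \<in> x_leaves"
    and smaller: "w \<noteq> a \<Longrightarrow> \<not> univalent X (edg X w) \<Longrightarrow> trivial_cl k (regraft w)"
  shows "trivial_cl k (regraft w) \<or> diag_iso X (regraft w)"
proof (cases "w = a")
  case True
  then show ?thesis using diag_iso_regraft_a by simp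
next
  case False
  show ?thesis
  proof (cases "univalent X (edg X w)")
    case True
    have "x \<in> {1..2}" "y \<in> {1..2}"
      using diagram univalent_a univalent_b col_a col_b two unfolding is_diagram_def by auto
    moreover obtain c where "c \<in> {1..2}" "col X (edg X w) = Some c"
      using diagram True two unfolding is_diagram_def by blast
    ultimately have "col X (edg X w) = Some x \<or> col X (edg X w) = Some y"
      using colours_differ by auto
    then show ?thesis
      using trivial_cl_regraft_same_colour diag_iso_regraft_other_colour w False True by blast
  next
    case False
    then show ?thesis using smaller \<open>w \<noteq> a\<close> by blast
  qed
qed

lemma trivial_cl_bicoloured_cherry:
  assumes two: "k = 2"
    and smaller: "\<And>Z t. non_strut_count Z < non_strut_count X \<Longrightarrow> is_diagram k Z \<Longrightarrow>
      trivalent Z t \<Longrightarrow> trivial_cl k Z"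
  shows "trivial_cl k X"
proof -
  have "trivial_cl k (regraft w) \<or> diag_iso X (regraft w)" if w: "w \<in> x_leaves" for w
  proof (rule regraft_trivial_or_iso[OF two w])
    assume "w \<noteq> a" "\<not> univalent X (edg X w)"
    then have "non_strut_count (regraft w) < non_strut_count X"
      using regraft_fewer_non_struts[OF w] by blast
    moreover have "trivalent (regraft w) p"
      using p_trivalent unfolding trivalent_def regraft_fields .
    ultimately show "trivial_cl k (regraft w)"
      using smaller is_diagram_regraft[OF w] by blast
  qed
  then show ?thesis
    using trivial_cl_of_relation_sum[OF diagram finite_x_leaves star_relation]
      a_in_x_leaves diag_iso_regraft_a by blast
qed

end

theorem trivial_cl_if_trivalent:
  assumes "is_diagram 2 X" and "trivalent X t"
  shows "trivial_cl 2 X"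
  using assms
proof (induction "non_strut_count X" arbitrary: X t rule: less_induct)
  case less
  note X = less.prems(1)
  interpret wf_diagram X
    by unfold_locales (use X in \<open>simp add: is_diagram_def\<close>)
  show ?case
  proof (cases "\<forall>C\<in>components X. is_tree_comp X C")
    case False
    then show ?thesis
      using rels_csl.nontree[OF X] rels_cl.csl lin_span_base unfolding trivial_cl_def by blast
  next
    case True
    moreover have "component_of X t \<in> components X"
      using less.prems(2) unfolding components_def trivalent_def by blast
    ultimately obtain p where cherry: "is_cherry X p"
      using exists_cherry[OF less.prems(2)] by blast
    then obtain x y where x: "col X (edg X p) = Some x" and y: "col X (edg X (rot X p)) = Some y"
      using X unfolding is_cherry_def is_diagram_def by blast
    show ?thesis
    proof (cases "x = y")
      case True
      then show ?thesis using trivial_cl_cherry_same_colour[OF X cherry] x y by simp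
    next
      case False
      interpret bicoloured_cherry X p 2 x y
        by unfold_locales (use X cherry x y False in \<open>auto simp: is_diagram_def\<close>)
      show ?thesis
        using trivial_cl_bicoloured_cherry less.hyps by blast
    qed
  qed
qed

theorem mainTheorem2:
  assumes "is_diagram 2 D"
    and "C \<in> components D"
    and "comp_degree D C \<ge> 2"
  shows "trivial_cl 2 D"
proof -
  interpret wf_diagram D
    by unfold_locales (use assms(1) in \<open>simp add: is_diagram_def\<close>)
  have "card (vertices_in D C) > 2"
    using assms(3) unfolding comp_degree_def by simp
  then obtain t where "trivalent D t"
    using trivalent_dart_in_large_component[OF assms(2)] by blast
  then show ?thesis
    using trivial_cl_if_trivalent[OF assms(1)] by blast
qed

end
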